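(* Let $D$ be a connected locally finite C-homogeneous digraph such that $N^+(x)$ and $N^-(x)$ are independent sets for all $x\in VD$. If $D$ contains a directed triangle as a subdigraph, then $|N^+(x)|=|N^-(x)|$ for every $x\in VD$.
   Context: A digraph has an irreflexive, antisymmetric edge relation; connectedness and local finiteness refer to the underlying undirected graph. $D$ is C-homogeneous if every isomorphism between finite connected induced subdigraphs extends to an automorphism of $D$. $N^+(x)=\{y: xy\in ED\}$, $N^-(x)=\{y: yx\in ED\}$; a set is independent if no two of its vertices are adjacent. *)

theory Defs
  imports Main
begin

definition digraph :: "'a set \<Rightarrow> ('a \<times> 'a) set \<Rightarrow> bool" where
  "digraph V E \<longleftrightarrow> E \<subseteq> V \<times> V \<and> (\<forall>x. (x, x) \<notin> E) \<and> (\<forall>x y. (x, y) \<in> E \<longrightarrow> (y, x) \<notin> E)"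

definition out_nbr :: "('a \<times> 'a) set \<Rightarrow> 'a \<Rightarrow> 'a set" where
  "out_nbr E x = {y. (x, y) \<in> E}"

definition in_nbr :: "('a \<times> 'a) set \<Rightarrow> 'a \<Rightarrow> 'a set" where
  "in_nbr E x = {y. (y, x) \<in> E}"

definition dconnected :: "'a set \<Rightarrow> ('a \<times> 'a) set \<Rightarrow> bool" where
  "dconnected A E \<longleftrightarrow> (\<forall>x\<in>A. \<forall>y\<in>A. (x, y) \<in> (E \<union> E\<inverse>)\<^sup>*)"

definition locally_finite :: "'a set \<Rightarrow> ('a \<times> 'a) set \<Rightarrow> bool" where
  "locally_finite V E \<longleftrightarrow> (\<forall>x\<in>V. finite (out_nbr E x \<union> in_nbr E x))"

definition independent :: "('a \<times> 'a) set \<Rightarrow> 'a set \<Rightarrow> bool" where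
  "independent E S \<longleftrightarrow> (\<forall>x\<in>S. \<forall>y\<in>S. (x, y) \<notin> E)"

definition induced :: "('a \<times> 'a) set \<Rightarrow> 'a set \<Rightarrow> ('a \<times> 'a) set" where
  "induced E A = E \<inter> (A \<times> A)"

definition iso_on :: "('a \<times> 'a) set \<Rightarrow> ('a \<Rightarrow> 'a) \<Rightarrow> 'a set \<Rightarrow> 'a set \<Rightarrow> bool" where
  "iso_on E f A B \<longleftrightarrow> bij_betw f A B \<and> (\<forall>x\<in>A. \<forall>y\<in>A. (x, y) \<in> E \<longleftrightarrow> (f x, f y) \<in> E)"

definition automorphism :: "'a set \<Rightarrow> ('a \<times> 'a) set \<Rightarrow> ('a \<Rightarrow> 'a) \<Rightarrow> bool" where
  "automorphism V E g \<longleftrightarrow> iso_on E g V V"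

definition C_homogeneous :: "'a set \<Rightarrow> ('a \<times> 'a) set \<Rightarrow> bool" where
  "C_homogeneous V E \<longleftrightarrow>
    (\<forall>A B f. A \<subseteq> V \<and> B \<subseteq> V \<and> finite A \<and> finite B
       \<and> dconnected A (induced E A) \<and> dconnected B (induced E B) \<and> iso_on E f A B
       \<longrightarrow> (\<exists>g. automorphism V E g \<and> (\<forall>x\<in>A. g x = f x)))"

end

theory Submission
  imports Defs
begin

text \<open>Every arc lies in the same number t of directed triangles, because C-homogeneity makes
  the automorphism group transitive on arcs, and t > 0 since one directed triangle exists.
  Counting the directed triangles through a vertex x once by their arc leaving x and once by
  their arc entering x gives |N+(x)| t = |N-(x)| t.\<close>

definition triangle_apices :: "('a \<times> 'a) set \<Rightarrow> 'a \<Rightarrow> 'a \<Rightarrow> 'a set" where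
  "triangle_apices E u v = {w. (v, w) \<in> E \<and> (w, u) \<in> E}"

lemma triangle_apices_subset_in_nbr: "triangle_apices E x y \<subseteq> in_nbr E x"
  and triangle_apices_subset_out_nbr: "triangle_apices E z x \<subseteq> out_nbr E x"
  by (auto simp: triangle_apices_def in_nbr_def out_nbr_def)

lemma sum_card_triangle_apices_out_eq_in:
  assumes "finite (out_nbr E x)" and "finite (in_nbr E x)"
  shows "(\<Sum>y\<in>out_nbr E x. card (triangle_apices E x y))
       = (\<Sum>z\<in>in_nbr E x. card (triangle_apices E z x))"
proof -
  let ?P = "Sigma (out_nbr E x) (triangle_apices E x)"
  let ?Q = "Sigma (in_nbr E x) (\<lambda>z. triangle_apices E z x)"
  have fin_apices: "finite (triangle_apices E x y)" "finite (triangle_apices E z x)" for y z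
    using assms finite_subset triangle_apices_subset_in_nbr triangle_apices_subset_out_nbr
    by metis+
  have "?P = prod.swap ` ?Q"
    by (auto simp: triangle_apices_def out_nbr_def in_nbr_def)
  then have "card ?P = card ?Q"
    by (simp add: card_image)
  then show ?thesis
    using assms fin_apices by (simp add: card_SigmaI)
qed

lemma automorphism_image_triangle_apices:
  assumes "digraph V E" and "automorphism V E g" and "(a, b) \<in> E"
  shows "g ` triangle_apices E a b = triangle_apices E (g a) (g b)"
proof -
  have E_V: "E \<subseteq> V \<times> V"
    using assms(1) by (simp add: digraph_def)
  have bij: "bij_betw g V V" and pres: "\<forall>x\<in>V. \<forall>y\<in>V. (x, y) \<in> E \<longleftrightarrow> (g x, g y) \<in> E"
    using assms(2) by (auto simp: automorphism_def iso_on_def)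
  have ab: "a \<in> V" "b \<in> V"
    using assms(3) E_V by auto
  show ?thesis
  proof
    show "g ` triangle_apices E a b \<subseteq> triangle_apices E (g a) (g b)"
      using E_V ab pres by (auto simp: triangle_apices_def)
  next
    show "triangle_apices E (g a) (g b) \<subseteq> g ` triangle_apices E a b"
    proof
      fix w' assume w': "w' \<in> triangle_apices E (g a) (g b)"
      then have "w' \<in> V"
        using E_V by (auto simp: triangle_apices_def)
      then obtain w where "w \<in> V" "w' = g w"
        using bij by (auto simp: bij_betw_def)
      then show "w' \<in> g ` triangle_apices E a b"
        using w' ab pres by (auto simp: triangle_apices_def)
    qed
  qed
qed

lemma automorphism_card_triangle_apices:
  assumes "digraph V E" and "automorphism V E g" and "(a, b) \<in> E"
  shows "card (triangle_apices E (g a) (g b)) = card (triangle_apices E a b)"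
proof -
  have "triangle_apices E a b \<subseteq> V"
    using assms(1) by (auto simp: digraph_def triangle_apices_def)
  then have "inj_on g (triangle_apices E a b)"
    using assms(2) inj_on_subset by (auto simp: automorphism_def iso_on_def bij_betw_def)
  then show ?thesis
    using automorphism_image_triangle_apices[OF assms] by (metis card_image)
qed

lemma dconnected_arc:
  assumes "(x, y) \<in> E"
  shows "dconnected {x, y} (induced E {x, y})"
proof -
  have "(x, y) \<in> induced E {x, y}"
    using assms by (simp add: induced_def)
  then show ?thesis
    by (auto simp: dconnected_def)
qed

lemma C_homogeneous_arc_transitive:
  assumes "digraph V E" and "C_homogeneous V E" and "(a, b) \<in> E" and "(u, v) \<in> E"
  shows "\<exists>g. automorphism V E g \<and> g a = u \<and> g b = v"
proof -
  have E_V: "E \<subseteq> V \<times> V" and irrefl: "\<forall>x. (x, x) \<notin> E"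
    and asym: "\<forall>x y. (x, y) \<in> E \<longrightarrow> (y, x) \<notin> E"
    using assms(1) by (auto simp: digraph_def)
  have "a \<noteq> b" "u \<noteq> v"
    using assms(3,4) irrefl by auto
  define f where "f x = (if x = a then u else v)" for x
  have "iso_on E f {a, b} {u, v}"
    using \<open>a \<noteq> b\<close> \<open>u \<noteq> v\<close> assms(3,4) irrefl asym
    by (auto simp: iso_on_def bij_betw_def inj_on_def f_def)
  moreover have "{a, b} \<subseteq> V" "{u, v} \<subseteq> V"
    using E_V assms(3,4) by auto
  ultimately obtain g where "automorphism V E g" "\<forall>x\<in>{a, b}. g x = f x"
    using assms(2) dconnected_arc[OF assms(3)] dconnected_arc[OF assms(4)]
    unfolding C_homogeneous_def by (meson finite.emptyI finite_insert)
  then show ?thesis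
    using \<open>a \<noteq> b\<close> by (auto simp: f_def)
qed

theorem lemma4p11:
  fixes V :: "'a set" and E :: "('a \<times> 'a) set"
  assumes "digraph V E"
    and "dconnected V E"
    and "locally_finite V E"
    and "C_homogeneous V E"
    and "\<forall>x\<in>V. independent E (out_nbr E x) \<and> independent E (in_nbr E x)"
    and "\<exists>a\<in>V. \<exists>b\<in>V. \<exists>c\<in>V. a \<noteq> b \<and> b \<noteq> c \<and> a \<noteq> c \<and> (a, b) \<in> E \<and> (b, c) \<in> E \<and> (c, a) \<in> E"
  shows "\<forall>x\<in>V. card (out_nbr E x) = card (in_nbr E x)"
proof
  fix x assume "x \<in> V"
  obtain a b c where abc: "(a, b) \<in> E" "(b, c) \<in> E" "(c, a) \<in> E"
    using assms(6) by blast
  define t where "t = card (triangle_apices E a b)"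
  have t_const: "card (triangle_apices E u v) = t" if "(u, v) \<in> E" for u v
    using C_homogeneous_arc_transitive[OF assms(1,4) abc(1) that]
      automorphism_card_triangle_apices[OF assms(1) _ abc(1)] by (auto simp: t_def)
  have fin: "finite (out_nbr E y)" "finite (in_nbr E y)" if "y \<in> V" for y
    using assms(3) that by (auto simp: locally_finite_def)
  have "b \<in> V"
    using assms(1) abc(1) by (auto simp: digraph_def)
  have "c \<in> triangle_apices E a b"
    using abc by (simp add: triangle_apices_def)
  then have "t > 0"
    using fin(1)[OF \<open>b \<in> V\<close>] triangle_apices_subset_out_nbr[of E a b]
    by (auto simp: t_def card_gt_0_iff dest: finite_subset)
  have "card (out_nbr E x) * t = card (in_nbr E x) * t"
    using sum_card_triangle_apices_out_eq_in[OF fin[OF \<open>x \<in> V\<close>]] t_const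
    by (simp add: out_nbr_def in_nbr_def)
  then show "card (out_nbr E x) = card (in_nbr E x)"
    using \<open>t > 0\<close> by simp
qed

end
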